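(* Let $V$ and $W$ be finite-dimensional real inner-product spaces and $T:V\to W$ a linear map. Let $(T_k)$ be a sequence of geometric functions $V\to W$ converging to $T$, and suppose there is a real number $p>0$ such that for every $k$, $T_k$ has a conformality factor $r_k$ with $p\le r_k$. Then there exists $K$ such that $\mathrm{rank}(T_k)=\mathrm{rank}(T)$ for all $k>K$.
   Context: A linear map $S:V\to W$ between real inner-product spaces is a geometric function if there exist a subspace $C\subset V$ with $V=\ker S\oplus C$ and a number $r>0$ such that $\langle S u,S v\rangle=r\langle u,v\rangle$ for all $u,v\in C$; $r$ is called a conformality factor of $S$ and $C$ a Conf subspace. Convergence is with respect to the operator norm on linear maps $V\to W$. *)

theory Defs
  imports "HOL-Analysis.Analysis"
begin

definition conf_subspace :: "('a::real_inner \<Rightarrow> 'b::real_inner) \<Rightarrow> 'a set \<Rightarrow> real \<Rightarrow> bool" where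
  "conf_subspace S C r \<longleftrightarrow>
     subspace C \<and>
     {x. S x = 0} \<inter> C = {0} \<and>
     {x + y | x y. S x = 0 \<and> y \<in> C} = UNIV \<and>
     r > 0 \<and>
     (\<forall>u\<in>C. \<forall>v\<in>C. inner (S u) (S v) = r * inner u v)"

definition conformality_factor :: "('a::real_inner \<Rightarrow> 'b::real_inner) \<Rightarrow> real \<Rightarrow> bool" where
  "conformality_factor S r \<longleftrightarrow> (\<exists>C. conf_subspace S C r)"

definition geometric_function :: "('a::real_inner \<Rightarrow> 'b::real_inner) \<Rightarrow> bool" where
  "geometric_function S \<longleftrightarrow> linear S \<and> (\<exists>r. conformality_factor S r)"

definition lin_rank :: "('a::euclidean_space \<Rightarrow> 'b::euclidean_space) \<Rightarrow> nat" where
  "lin_rank S = dim (range S)"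

end

theory Submission
  imports Defs
begin

text \<open>The rank is lower semicontinuous: T is bounded below on the orthogonal complement U of
  its kernel, so every S close enough to T is still injective on U and has rank at least
  dim U = rank T. Conversely, a conformal map S with factor r \<ge> p stretches its Conf subspace C
  by exactly sqrt r \<ge> sqrt p, so any T with norm (S - T) < sqrt p is injective on C and has
  rank at least dim C = rank S.\<close>

lemma dim_image_eq_of_kernel_trivial:
  fixes f :: "'a::euclidean_space \<Rightarrow> 'b::euclidean_space"
  assumes "linear f" "subspace U" "\<And>x. x \<in> U \<Longrightarrow> f x = 0 \<Longrightarrow> x = 0"
  shows "dim (f ` U) = dim U"
proof (rule dim_image_eq[OF assms(1)])
  show "inj_on f (span U)"
    unfolding span_eq_iff[THEN iffD2, OF assms(2)]
    using linear_inj_on_iff_eq_0[OF assms(1,2)] assms(3) by simp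
qed

lemma dim_le_lin_rank_of_kernel_trivial:
  fixes f :: "'a::euclidean_space \<Rightarrow> 'b::euclidean_space"
  assumes "linear f" "subspace U" "\<And>x. x \<in> U \<Longrightarrow> f x = 0 \<Longrightarrow> x = 0"
  shows "dim U \<le> lin_rank f"
proof -
  have "dim U = dim (f ` U)"
    using dim_image_eq_of_kernel_trivial[OF assms] by simp
  also have "\<dots> \<le> lin_rank f"
    unfolding lin_rank_def by (rule dim_subset) auto
  finally show ?thesis .
qed

lemma kernel_trivial_of_bounded_below_near:
  fixes S T :: "'a::real_normed_vector \<Rightarrow>\<^sub>L 'b::real_normed_vector"
  assumes below: "c * norm x \<le> norm (S x)" and near: "norm (S - T) < c" and "T x = 0"
  shows "x = 0"
proof (rule ccontr)
  assume "x \<noteq> 0"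
  have "norm (S x) = norm ((S - T) x)"
    using \<open>T x = 0\<close> by (simp add: blinfun.diff_left)
  also have "\<dots> \<le> norm (S - T) * norm x"
    by (rule norm_blinfun)
  also have "\<dots> < c * norm x"
    using near \<open>x \<noteq> 0\<close> by simp
  finally show False
    using below by simp
qed

lemma lin_rank_eq_dim_bounded_below_subspace:
  fixes T :: "'a::euclidean_space \<Rightarrow>\<^sub>L 'b::euclidean_space"
  obtains U and c :: real where "subspace U" "dim U = lin_rank (blinfun_apply T)" "c > 0"
    "\<And>x. x \<in> U \<Longrightarrow> c * norm x \<le> norm (T x)"
proof -
  define U where "U = orthogonal_comp (T -` {0})"
  have lin: "linear T"
    by (simp add: blinfun.bounded_linear_right bounded_linear.linear)
  have sub: "subspace U"
    unfolding U_def by (rule subspace_orthogonal_comp)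
  have kernel: "x = 0" if "x \<in> U" "T x = 0" for x
    using that orthogonal_Int_0[OF linear_subspace_vimage[OF lin subspace_single_0]]
    unfolding U_def by blast
  have "T ` U = range T"
  proof -
    have "T y \<in> T ` U" for y
    proof -
      obtain k u where "y = k + u" "T k = 0" "u \<in> U"
        using subspace_sum_orthogonal_comp[OF linear_subspace_vimage[OF lin subspace_single_0]]
        unfolding U_def by (metis UNIV_I set_plus_elim singleton_iff vimageE)
      then show ?thesis
        by (simp add: blinfun.add_right)
    qed
    then show ?thesis by auto
  qed
  then have "dim U = lin_rank (blinfun_apply T)"
    unfolding lin_rank_def using dim_image_eq_of_kernel_trivial[OF lin sub kernel] by simp
  moreover obtain c where "c > 0" "\<And>x. x \<in> U \<Longrightarrow> c * norm x \<le> norm (T x)"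
    using injective_imp_isometric[OF closed_subspace[OF sub] sub blinfun.bounded_linear_right]
      kernel by blast
  ultimately show ?thesis
    using that sub by blast
qed

lemma eventually_lin_rank_ge:
  fixes T :: "'a::euclidean_space \<Rightarrow>\<^sub>L 'b::euclidean_space"
  shows "\<forall>\<^sub>F S in nhds T. lin_rank (blinfun_apply T) \<le> lin_rank (blinfun_apply S)"
proof -
  obtain U c where U: "subspace U" "dim U = lin_rank (blinfun_apply T)" "c > 0"
    and below: "\<And>x. x \<in> U \<Longrightarrow> c * norm x \<le> norm (T x)"
    using lin_rank_eq_dim_bounded_below_subspace[of T] by blast
  have "lin_rank (blinfun_apply T) \<le> lin_rank (blinfun_apply S)" if "dist S T < c" for S
  proof -
    have near: "norm (T - S) < c"
      using that by (simp add: dist_norm norm_minus_commute)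
    have "x = 0" if "x \<in> U" "S x = 0" for x
      by (rule kernel_trivial_of_bounded_below_near[OF below[OF that(1)] near that(2)])
    then have "dim U \<le> lin_rank (blinfun_apply S)"
      by (intro dim_le_lin_rank_of_kernel_trivial[OF _ U(1)])
        (simp_all add: blinfun.bounded_linear_right bounded_linear.linear)
    then show ?thesis
      using U(2) by simp
  qed
  then show ?thesis
    unfolding eventually_nhds_metric using \<open>c > 0\<close> by blast
qed

lemma norm_conf_subspace:
  assumes "conf_subspace S C r" "u \<in> C"
  shows "norm (S u) = sqrt r * norm u"
  using assms by (simp add: conf_subspace_def norm_eq_sqrt_inner real_sqrt_mult)

lemma lin_rank_eq_dim_conf_subspace:
  fixes S :: "'a::euclidean_space \<Rightarrow> 'b::euclidean_space"
  assumes lin: "linear S" and conf: "conf_subspace S C r"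
  shows "lin_rank S = dim C"
proof -
  have sub: "subspace C" and kernel: "\<And>x. x \<in> C \<Longrightarrow> S x = 0 \<Longrightarrow> x = 0"
    and decomp: "{x + y | x y. S x = 0 \<and> y \<in> C} = UNIV"
    using conf unfolding conf_subspace_def by blast+
  have "S y \<in> S ` C" for y
  proof -
    obtain k c where "y = k + c" "S k = 0" "c \<in> C"
      using decomp by blast
    then show ?thesis
      using linear_add[OF lin] by simp
  qed
  then have "S ` C = range S"
    by auto
  then show ?thesis
    using dim_image_eq_of_kernel_trivial[OF lin sub kernel] unfolding lin_rank_def by simp
qed

lemma lin_rank_le_near_conf_subspace:
  fixes S T :: "'a::euclidean_space \<Rightarrow>\<^sub>L 'b::euclidean_space"
  assumes conf: "conf_subspace S C r" and near: "norm (S - T) < sqrt r"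
  shows "lin_rank (blinfun_apply S) \<le> lin_rank (blinfun_apply T)"
proof -
  have lin: "linear S" "linear T"
    by (simp_all add: blinfun.bounded_linear_right bounded_linear.linear)
  have sub: "subspace C"
    using conf unfolding conf_subspace_def by blast
  have "x = 0" if "x \<in> C" "T x = 0" for x
    using kernel_trivial_of_bounded_below_near[OF _ near that(2)] norm_conf_subspace[OF conf that(1)]
    by simp
  then have "dim C \<le> lin_rank (blinfun_apply T)"
    by (rule dim_le_lin_rank_of_kernel_trivial[OF lin(2) sub])
  then show ?thesis
    using lin_rank_eq_dim_conf_subspace[OF lin(1) conf] by simp
qed

theorem mainTheorem6:
  fixes T :: "'a::euclidean_space \<Rightarrow>\<^sub>L 'b::euclidean_space"
    and Tk :: "nat \<Rightarrow> ('a \<Rightarrow>\<^sub>L 'b)"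
    and p :: real
  assumes geo: "\<And>k. geometric_function (blinfun_apply (Tk k))"
    and conv: "Tk \<longlonglongrightarrow> T"
    and p_pos: "p > 0"
    and factor: "\<And>k. \<exists>r. conformality_factor (blinfun_apply (Tk k)) r \<and> p \<le> r"
  shows "\<exists>K. \<forall>k>K. lin_rank (blinfun_apply (Tk k)) = lin_rank (blinfun_apply T)"
proof -
  have ge: "\<forall>\<^sub>F k in sequentially. lin_rank (blinfun_apply T) \<le> lin_rank (blinfun_apply (Tk k))"
    using conv eventually_lin_rank_ge filterlim_iff by blast
  have "lin_rank (blinfun_apply (Tk k)) \<le> lin_rank (blinfun_apply T)"
    if "norm (Tk k - T) < sqrt p" for k
  proof -
    obtain r C where "conf_subspace (Tk k) C r" "p \<le> r"
      using factor[of k] unfolding conformality_factor_def by blast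
    then show ?thesis
      using lin_rank_le_near_conf_subspace that by (meson less_le_trans real_sqrt_le_iff)
  qed
  then have le: "\<forall>\<^sub>F k in sequentially. lin_rank (blinfun_apply (Tk k)) \<le> lin_rank (blinfun_apply T)"
    using tendstoD[OF conv, of "sqrt p"] p_pos by (auto simp: dist_norm elim!: eventually_mono)
  have "\<forall>\<^sub>F k in sequentially. lin_rank (blinfun_apply (Tk k)) = lin_rank (blinfun_apply T)"
    using ge le by eventually_elim simp
  then show ?thesis
    unfolding eventually_sequentially by (meson less_imp_le)
qed

end
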